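(* For a graph $G=(V,E)$ and integer $\tau\ge 1$ define $$Q_{\mathrm{Del\text{-}Deg}}(G,\tau)=-\tfrac12\sum_{v\in V,\ \deg_G(v)\ge\tau}(\deg_G(v)-\tau).$$ Then: (1) for fixed $G$, $Q_{\mathrm{Del\text{-}Deg}}(G,\tau)$ is non-decreasing in $\tau$ and equals $0$ for all $\tau\ge\deg(G)$; (2) for any two graphs $G,G'$ that differ in exactly one edge, $|Q_{\mathrm{Del\text{-}Deg}}(G,\tau)-Q_{\mathrm{Del\text{-}Deg}}(G',\tau)|\le 1$ for all $\tau$, i.e., its global sensitivity under edge neighboring is $1$; (3) if $G'$ is obtained from $G$ by adding one edge, then $Q_{\mathrm{Del\text{-}Deg}}(G,\tau)\ge Q_{\mathrm{Del\text{-}Deg}}(G',\tau)$ for every $\tau$.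
   Context: Graphs are finite, simple and undirected. $\deg_G(v)$ denotes the degree of node $v$ in $G$ and $\deg(G)=\max_{v}\deg_G(v)$ is the maximum degree. *)

theory Defs
  imports Complex_Main
begin

definition simple_graph :: "'a set \<Rightarrow> 'a set set \<Rightarrow> bool" where
  "simple_graph V E \<longleftrightarrow> finite V \<and> (\<forall>e\<in>E. e \<subseteq> V \<and> card e = 2)"

definition deg :: "'a set set \<Rightarrow> 'a \<Rightarrow> nat" where
  "deg E v = card {e \<in> E. v \<in> e}"

definition max_deg :: "'a set \<Rightarrow> 'a set set \<Rightarrow> nat" where
  "max_deg V E = (if V = {} then 0 else Max (deg E ` V))"

definition Q_del_deg :: "'a set \<Rightarrow> 'a set set \<Rightarrow> nat \<Rightarrow> real" where
  "Q_del_deg V E \<tau> = - (1/2) * (\<Sum>v \<in> {v \<in> V. deg E v \<ge> \<tau>}. (real (deg E v) - real \<tau>))"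

end

theory Submission
  imports Defs
begin

text \<open>Writing the query as \<open>-1/2\<close> times the sum over all vertices of the excess
  \<open>max 0 (deg v - \<tau>)\<close>, every claim becomes a pointwise statement about the excess.
  It is antitone in \<tau> and vanishes once \<tau> bounds every degree; adding an edge raises the
  degrees of its two endpoints by one and leaves all others unchanged, so each of the two
  excesses grows by 0 or 1 and the query drops by between 0 and 1.\<close>

definition degree_excess :: "nat \<Rightarrow> nat \<Rightarrow> real" where
  "degree_excess \<tau> d = max 0 (real d - real \<tau>)"

lemma degree_excess_antimono: "\<tau> \<le> \<tau>' \<Longrightarrow> degree_excess \<tau>' d \<le> degree_excess \<tau> d"
  by (simp add: degree_excess_def)

lemma degree_excess_eq_0: "d \<le> \<tau> \<Longrightarrow> degree_excess \<tau> d = 0"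
  by (simp add: degree_excess_def)

lemma degree_excess_Suc_bounds:
  "0 \<le> degree_excess \<tau> (Suc d) - degree_excess \<tau> d"
  "degree_excess \<tau> (Suc d) - degree_excess \<tau> d \<le> 1"
  by (auto simp: degree_excess_def)

lemma Q_del_deg_eq_sum_degree_excess:
  assumes "finite V"
  shows "Q_del_deg V E \<tau> = - (1/2) * (\<Sum>v\<in>V. degree_excess \<tau> (deg E v))"
proof -
  have "(\<Sum>v \<in> {v \<in> V. deg E v \<ge> \<tau>}. real (deg E v) - real \<tau>)
      = (\<Sum>v \<in> {v \<in> V. deg E v \<ge> \<tau>}. degree_excess \<tau> (deg E v))"
    by (rule sum.cong) (auto simp: degree_excess_def)
  also have "\<dots> = (\<Sum>v\<in>V. degree_excess \<tau> (deg E v))"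
    using assms by (intro sum.mono_neutral_left) (auto simp: degree_excess_def)
  finally show ?thesis
    unfolding Q_del_deg_def by simp
qed

lemma Q_del_deg_mono:
  assumes "finite V" "\<tau> \<le> \<tau>'"
  shows "Q_del_deg V E \<tau> \<le> Q_del_deg V E \<tau>'"
proof -
  have "(\<Sum>v\<in>V. degree_excess \<tau>' (deg E v)) \<le> (\<Sum>v\<in>V. degree_excess \<tau> (deg E v))"
    using assms(2) by (intro sum_mono degree_excess_antimono)
  then show ?thesis
    using assms(1) by (simp add: Q_del_deg_eq_sum_degree_excess)
qed

lemma deg_le_max_deg: "finite V \<Longrightarrow> v \<in> V \<Longrightarrow> deg E v \<le> max_deg V E"
  by (auto simp: max_deg_def)

lemma Q_del_deg_eq_0:
  assumes "finite V" "max_deg V E \<le> \<tau>"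
  shows "Q_del_deg V E \<tau> = 0"
proof -
  have "degree_excess \<tau> (deg E v) = 0" if "v \<in> V" for v
    using deg_le_max_deg[OF assms(1) that, of E] assms(2) by (simp add: degree_excess_eq_0)
  then show ?thesis
    using assms(1) by (simp add: Q_del_deg_eq_sum_degree_excess)
qed

lemma simple_graph_finite_edges: "simple_graph V E \<Longrightarrow> finite E"
  unfolding simple_graph_def by (meson Pow_iff finite_Pow_iff finite_subset subsetI)

lemma deg_insert:
  assumes "finite E" "e \<notin> E"
  shows "deg (insert e E) v = (if v \<in> e then Suc (deg E v) else deg E v)"
proof -
  have "{x \<in> insert e E. v \<in> x} = (if v \<in> e then insert e {x \<in> E. v \<in> x} else {x \<in> E. v \<in> x})"
    by auto
  then show ?thesis
    using assms by (simp add: deg_def)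
qed

lemma Q_del_deg_insert_bounds:
  assumes "finite V" "finite E" "e \<notin> E"
  shows "Q_del_deg V (insert e E) \<tau> \<le> Q_del_deg V E \<tau>"
    and "Q_del_deg V E \<tau> - Q_del_deg V (insert e E) \<tau> \<le> real (card (V \<inter> e)) / 2"
proof -
  define growth where
    "growth v = degree_excess \<tau> (deg (insert e E) v) - degree_excess \<tau> (deg E v)" for v
  have growth_bounds: "0 \<le> growth v" "growth v \<le> 1" for v
    using degree_excess_Suc_bounds deg_insert[OF assms(2,3)] by (simp_all add: growth_def)
  have "Q_del_deg V E \<tau> - Q_del_deg V (insert e E) \<tau> = (\<Sum>v\<in>V. growth v) / 2"
    using assms(1) by (simp add: Q_del_deg_eq_sum_degree_excess growth_def sum_subtractf)
  also have "(\<Sum>v\<in>V. growth v) = (\<Sum>v\<in>V \<inter> e. growth v)"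
    using assms(1) deg_insert[OF assms(2,3)]
    by (intro sum.mono_neutral_right) (auto simp: growth_def)
  finally have diff: "Q_del_deg V E \<tau> - Q_del_deg V (insert e E) \<tau> = (\<Sum>v\<in>V \<inter> e. growth v) / 2" .
  have "0 \<le> (\<Sum>v\<in>V \<inter> e. growth v)"
    by (rule sum_nonneg) (rule growth_bounds(1))
  with diff show "Q_del_deg V (insert e E) \<tau> \<le> Q_del_deg V E \<tau>"
    by linarith
  have "(\<Sum>v\<in>V \<inter> e. growth v) \<le> real (card (V \<inter> e))"
    using sum_bounded_above[of "V \<inter> e" growth 1] growth_bounds(2) by simp
  with diff show "Q_del_deg V E \<tau> - Q_del_deg V (insert e E) \<tau> \<le> real (card (V \<inter> e)) / 2"
    by linarith
qed

lemma card_sym_diff_eq_1E: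
  assumes "card ((E - E') \<union> (E' - E)) = 1"
  obtains e where "E' = insert e E" "e \<notin> E" | e where "E = insert e E'" "e \<notin> E'"
proof -
  obtain e where e: "(E - E') \<union> (E' - E) = {e}"
    using assms card_1_singletonE by blast
  have agree: "x \<in> E \<longleftrightarrow> x \<in> E'" if "x \<noteq> e" for x
    using e that by blast
  show thesis
  proof (cases "e \<in> E")
    case True
    have "E = insert e E'"
      using True agree by (intro set_eqI) (metis insert_iff)
    moreover have "e \<notin> E'"
      using True e by blast
    ultimately show thesis by (rule that(2))
  next
    case False
    have "E' = insert e E"
      using False e agree by (intro set_eqI) (metis Diff_iff Un_iff insert_iff)
    then show thesis using False by (rule that(1))
  qed
qed

lemma Q_del_deg_edge_sensitivity:
  assumes "simple_graph V E" "simple_graph V E'" "card ((E - E') \<union> (E' - E)) = 1"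
  shows "\<bar>Q_del_deg V E \<tau> - Q_del_deg V E' \<tau>\<bar> \<le> 1"
proof -
  have insert_edge: "\<bar>Q_del_deg V F \<tau> - Q_del_deg V (insert e F) \<tau>\<bar> \<le> 1"
    if "simple_graph V F" "simple_graph V (insert e F)" "e \<notin> F" for F e
  proof -
    have "e \<subseteq> V" "card e = 2" "finite V"
      using that(2) by (simp_all add: simple_graph_def)
    then have "card (V \<inter> e) = 2" "finite V"
      by (simp_all add: Int_absorb1)
    with Q_del_deg_insert_bounds[OF _ simple_graph_finite_edges[OF that(1)] that(3), of V \<tau>]
    show ?thesis
      by simp
  qed
  show ?thesis
  proof (cases rule: card_sym_diff_eq_1E[OF assms(3)])
    case (1 e)
    then show ?thesis
      using insert_edge[of E e] assms(1,2) by simp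
  next
    case (2 e)
    then show ?thesis
      using insert_edge[of E' e] assms(1,2) by (simp add: abs_minus_commute)
  qed
qed

theorem mainTheorem2:
  shows
   "(\<forall>(V :: 'a set) E. simple_graph V E \<longrightarrow>
        (\<forall>\<tau> \<tau>'. 1 \<le> \<tau> \<and> \<tau> \<le> \<tau>' \<longrightarrow> Q_del_deg V E \<tau> \<le> Q_del_deg V E \<tau>') \<and>
        (\<forall>\<tau>. 1 \<le> \<tau> \<and> max_deg V E \<le> \<tau> \<longrightarrow> Q_del_deg V E \<tau> = 0))
    \<and> (\<forall>(V :: 'a set) E E'. simple_graph V E \<and> simple_graph V E' \<and>
          card ((E - E') \<union> (E' - E)) = 1 \<longrightarrow>
        (\<forall>\<tau>. 1 \<le> \<tau> \<longrightarrow> \<bar>Q_del_deg V E \<tau> - Q_del_deg V E' \<tau>\<bar> \<le> 1))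
    \<and> (\<forall>(V :: 'a set) E e. simple_graph V E \<and> simple_graph V (insert e E) \<and> e \<notin> E \<longrightarrow>
        (\<forall>\<tau>. 1 \<le> \<tau> \<longrightarrow> Q_del_deg V E \<tau> \<ge> Q_del_deg V (insert e E) \<tau>))"
proof (intro conjI allI impI)
  fix V :: "'a set" and E and \<tau> \<tau>' :: nat
  assume "simple_graph V E" "1 \<le> \<tau> \<and> \<tau> \<le> \<tau>'"
  then show "Q_del_deg V E \<tau> \<le> Q_del_deg V E \<tau>'"
    by (simp add: Q_del_deg_mono simple_graph_def)
next
  fix V :: "'a set" and E and \<tau> :: nat
  assume "simple_graph V E" "1 \<le> \<tau> \<and> max_deg V E \<le> \<tau>"
  then show "Q_del_deg V E \<tau> = 0"
    by (simp add: Q_del_deg_eq_0 simple_graph_def)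
next
  fix V :: "'a set" and E E' and \<tau> :: nat
  assume "simple_graph V E \<and> simple_graph V E' \<and> card ((E - E') \<union> (E' - E)) = 1"
  then show "\<bar>Q_del_deg V E \<tau> - Q_del_deg V E' \<tau>\<bar> \<le> 1"
    by (simp add: Q_del_deg_edge_sensitivity)
next
  fix V :: "'a set" and E e and \<tau> :: nat
  assume "simple_graph V E \<and> simple_graph V (insert e E) \<and> e \<notin> E"
  then have "finite V" "finite E" "e \<notin> E"
    using simple_graph_finite_edges by (auto simp: simple_graph_def)
  then show "Q_del_deg V E \<tau> \<ge> Q_del_deg V (insert e E) \<tau>"
    by (rule Q_del_deg_insert_bounds(1))
qed

end
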